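(* Let $\alpha,\beta,\theta$ be cost functions of class $C^1$ with $\alpha+\beta=\theta$, and assume $\theta$ is strictly convex. Let $f:\mathbb{R}\to\mathbb{R}$ be a convex function of class $C^1$ that is bounded from below. Then there exist convex functions $f_1,f_2:\mathbb{R}\to\mathbb{R}$ of class $C^1$ with the following properties: - $f=f_1+f_2$; - for all $t>0$, $Q_t^\theta f=Q_t^\alpha f_1+Q_t^\beta f_2$; - on the set $I=\{x\in\mathbb{R}: f'(x)\in\theta'(\mathbb{R})\}$, one has $f_1'=\alpha'\circ(\theta')^{-1}\circ f'$. Concretely, $f_1$ can be taken as $f_1(x)=a+\int_{x_0}^x\alpha'\circ(\theta')^{-1}\circ f'(u)\,du$ on $I$ for a point $x_0\in I$ and any constant $a$, extended affinely outside $I$.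
   Context: A cost function is an even convex function $\theta:\mathbb{R}\to[0,\infty)$ with $\theta(0)=0$. For $t>0$ and $f:\mathbb{R}\to\mathbb{R}$, the Hopf–Lax operator is $$Q_t^\theta f(x)=\inf_{y\in\mathbb{R}}\Big\{f(y)+t\,\theta\Big(\frac{y-x}{t}\Big)\Big\}.$$ For strictly convex $\theta\in C^1$, $(\theta')^{-1}:\theta'(\mathbb{R})\to\mathbb{R}$ denotes the inverse of the strictly increasing map $\theta'$. *)

theory Defs
  imports "HOL-Analysis.Analysis"
begin

definition cost_function :: "(real \<Rightarrow> real) \<Rightarrow> bool" where
  "cost_function \<theta> \<longleftrightarrow> (\<forall>x. \<theta> (- x) = \<theta> x) \<and> convex_on UNIV \<theta> \<and> (\<forall>x. \<theta> x \<ge> 0) \<and> \<theta> 0 = 0"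

definition strictly_convex :: "(real \<Rightarrow> real) \<Rightarrow> bool" where
  "strictly_convex f \<longleftrightarrow>
     (\<forall>x y u. x \<noteq> y \<and> 0 < u \<and> u < 1 \<longrightarrow> f ((1 - u) * x + u * y) < (1 - u) * f x + u * f y)"

definition C1 :: "(real \<Rightarrow> real) \<Rightarrow> bool" where
  "C1 f \<longleftrightarrow> (\<forall>x. f differentiable (at x)) \<and> continuous_on UNIV (deriv f)"

text \<open>Hopf--Lax operator, valued in the extended reals (the infimum may be -infinity).\<close>
definition hopf_lax :: "(real \<Rightarrow> real) \<Rightarrow> real \<Rightarrow> (real \<Rightarrow> real) \<Rightarrow> real \<Rightarrow> ereal" where
  "hopf_lax \<theta> t f x = (INF y. ereal (f y + t * \<theta> ((y - x) / t)))"

end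

theory Submission
  imports Defs
begin

text \<open>
  Write \<open>a, b, \<vartheta>\<close> for the derivatives of \<open>\<alpha>, \<beta>, \<theta>\<close>; they are odd and nondecreasing, and
  \<open>\<vartheta> = a + b\<close>. The slope \<open>v\<close> of \<open>f\<close> is split as \<open>P v + (v - P v)\<close>, where \<open>P\<close> is a nondecreasing,
  1-Lipschitz function agreeing with \<open>a \<circ> \<vartheta>\<^sup>-\<^sup>1\<close> on the range of \<open>\<vartheta>\<close>; \<open>f\<^sub>1\<close> is a primitive of
  \<open>P \<circ> f'\<close> and \<open>f\<^sub>2 = f - f\<^sub>1\<close>, both convex. For \<open>t > 0\<close>, strict convexity gives \<open>\<vartheta> 1 > 0\<close>, and
  since \<open>f\<close> is bounded below, \<open>y \<mapsto> f' y + \<vartheta> ((y - x) / t)\<close> changes sign; at a zero \<open>z\<close> the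
  infimum defining \<open>Q\<^sub>t\<^sup>\<theta> f x\<close> is attained, and \<open>f' z = \<vartheta> (-r)\<close> with \<open>r = (z - x) / t\<close>.
  Then \<open>f\<^sub>1' z = -a r\<close> and \<open>f\<^sub>2' z = -b r\<close>, so by convexity \<open>z\<close> also minimises the infima defining \<open>Q\<^sub>t\<^sup>\<alpha> f\<^sub>1 x\<close> and
  \<open>Q\<^sub>t\<^sup>\<beta> f\<^sub>2 x\<close>, and the three minimal values add up.
\<close>

lemma C1_has_real_derivative:
  assumes "C1 g"
  shows "(g has_real_derivative deriv g x) (at x)"
  using assms by (simp add: C1_def DERIV_deriv_iff_real_differentiable)

lemma C1I:
  assumes "\<And>x. (g has_real_derivative g' x) (at x)" and "continuous_on UNIV g'"
  shows "C1 g"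
proof -
  have "deriv g = g'"
    using assms(1) DERIV_imp_deriv by blast
  then show ?thesis
    using assms unfolding C1_def real_differentiable_def by blast
qed

lemma deriv_eq_add_if_C1:
  assumes "C1 \<alpha>" "C1 \<beta>" "\<And>u. \<alpha> u + \<beta> u = \<theta> u"
  shows "deriv \<theta> s = deriv \<alpha> s + deriv \<beta> s"
proof -
  have "((\<lambda>u. \<alpha> u + \<beta> u) has_real_derivative deriv \<alpha> s + deriv \<beta> s) (at s)"
    using assms(1,2) by (intro DERIV_add C1_has_real_derivative)
  then show ?thesis
    using assms(3) DERIV_imp_deriv by simp
qed

lemma exists_antiderivative:
  fixes p :: "real \<Rightarrow> real"
  assumes "continuous_on UNIV p"
  obtains F where "\<And>x. (F has_real_derivative p x) (at x)"
  using einterval_antiderivative[of "-\<infinity>" "\<infinity>" p] assms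
  by (auto simp: has_real_derivative_iff_has_vector_derivative continuous_on_eq_continuous_at)

lemma convex_on_UNIV_above_tangent:
  fixes g :: "real \<Rightarrow> real"
  assumes "convex_on UNIV g" "(g has_real_derivative d) (at c)"
  shows "g c + d * (y - c) \<le> g y"
  using convex_on_imp_above_tangent[OF assms(1), of c y d] assms(2) by auto

lemma convex_on_UNIV_deriv_mono:
  fixes g :: "real \<Rightarrow> real"
  assumes "convex_on UNIV g" "\<And>x. (g has_real_derivative g' x) (at x)"
  shows "mono g'"
proof (rule monoI)
  fix x y :: real
  assume "x \<le> y"
  have "g x + g' x * (y - x) \<le> g y" "g y + g' y * (x - y) \<le> g x"
    using convex_on_UNIV_above_tangent[OF assms(1) assms(2)] by auto
  then have "0 \<le> (g' y - g' x) * (y - x)"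
    by (simp add: algebra_simps)
  with \<open>x \<le> y\<close> show "g' x \<le> g' y"
    by (cases "x = y") (auto simp: zero_le_mult_iff)
qed

lemma convex_on_UNIV_deriv_mono_iff:
  fixes g :: "real \<Rightarrow> real"
  assumes "\<And>x. (g has_real_derivative g' x) (at x)"
  shows "convex_on UNIV g \<longleftrightarrow> mono g'"
  using convex_on_UNIV_deriv_mono[OF _ assms] convex_on_realI[OF connected_UNIV assms]
  by (auto simp: mono_def)

lemma deriv_odd_if_even:
  fixes g :: "real \<Rightarrow> real"
  assumes "\<And>x. g (- x) = g x" "\<And>x. (g has_real_derivative g' x) (at x)"
  shows "g' (- x) = - g' x"
proof -
  have "(g has_real_derivative - g' (- x)) (at x)"
    using DERIV_chain2[OF assms(2) DERIV_minus[OF DERIV_ident], of x] assms(1) by simp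
  then show ?thesis
    using DERIV_unique assms(2) by fastforce
qed

lemma cost_function_deriv_odd:
  assumes "cost_function c" "C1 c"
  shows "deriv c (- x) = - deriv c x"
  using assms(1) by (intro deriv_odd_if_even[OF _ C1_has_real_derivative[OF assms(2)]])
    (simp add: cost_function_def)

lemma cost_function_deriv_mono:
  assumes "cost_function c" "C1 c"
  shows "mono (deriv c)"
  using assms(1) by (intro convex_on_UNIV_deriv_mono[OF _ C1_has_real_derivative[OF assms(2)]])
    (simp add: cost_function_def)

lemma strictly_convex_cost_function_deriv_pos:
  assumes "cost_function c" "strictly_convex c" "C1 c" "s > 0"
  shows "deriv c s > 0"
proof -
  have c0: "c 0 = 0" and "c (s / 2) \<ge> 0" and convex: "convex_on UNIV c"
    using assms(1) unfolding cost_function_def by auto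
  moreover have "c ((1 - 1/2) * 0 + 1/2 * s) < (1 - 1/2) * c 0 + 1/2 * c s"
    using assms(2,4) unfolding strictly_convex_def by (elim allE[of _ 0] allE[of _ s] allE[of _ "1/2"]) simp
  ultimately have "c s > 0"
    by simp
  moreover have "c s + deriv c s * (0 - s) \<le> c 0"
    by (rule convex_on_UNIV_above_tangent[OF convex C1_has_real_derivative[OF assms(3)]])
  ultimately have "0 < deriv c s * s"
    using c0 by simp
  then show ?thesis
    using \<open>s > 0\<close> by (simp add: zero_less_mult_iff)
qed

text \<open>
  For nondecreasing \<open>a, b\<close> this is \<open>a \<circ> (a + b)\<^sup>-\<^sup>1\<close> on the range of \<open>a + b\<close>, extended so that both
  it and the identity minus it stay nondecreasing.
\<close>
definition split_slope :: "(real \<Rightarrow> real) \<Rightarrow> (real \<Rightarrow> real) \<Rightarrow> real \<Rightarrow> real" where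
  "split_slope a b v = (SUP s. min (a s) (v - b s))"

context
  fixes a b :: "real \<Rightarrow> real"
  assumes mono_a: "mono a" and mono_b: "mono b"
begin

lemma bdd_above_split_slope_range: "bdd_above (range (\<lambda>s. min (a s) (v - b s)))"
proof (rule bdd_aboveI2)
  fix s :: real
  show "min (a s) (v - b s) \<le> max (a 0) (v - b 0)"
    using monoD[OF mono_a, of s 0] monoD[OF mono_b, of 0 s] by (cases "s \<le> 0") auto
qed

lemma split_slope_add: "split_slope a b (a s + b s) = a s"
  unfolding split_slope_def
proof (rule cSup_eq_maximum)
  show "a s \<in> range (\<lambda>u. min (a u) (a s + b s - b u))"
    by (auto intro!: image_eqI[of _ _ s])
  show "y \<le> a s" if y_range: "y \<in> range (\<lambda>u. min (a u) (a s + b s - b u))" for y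
  proof -
    obtain u where y: "y = min (a u) (a s + b s - b u)"
      using y_range by blast
    show ?thesis
      using y monoD[OF mono_a, of u s] monoD[OF mono_b, of s u] by (cases "u \<le> s") auto
  qed
qed

lemma split_slope_eq_inv_into:
  assumes "v \<in> range (\<lambda>s. a s + b s)"
  shows "split_slope a b v = a (inv_into UNIV (\<lambda>s. a s + b s) v)"
  using split_slope_add f_inv_into_f[OF assms] by metis

lemma split_slope_mono: "mono (split_slope a b)"
proof (rule monoI)
  fix v w :: real
  assume "v \<le> w"
  show "split_slope a b v \<le> split_slope a b w"
    unfolding split_slope_def
  proof (rule cSUP_mono[OF _ bdd_above_split_slope_range])
    show "\<exists>m\<in>UNIV. min (a s) (v - b s) \<le> min (a m) (w - b m)" for s
      using \<open>v \<le> w\<close> by (intro bexI[of _ s]) auto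
  qed simp
qed

lemma split_slope_diff_le:
  assumes "v \<le> w"
  shows "split_slope a b w - split_slope a b v \<le> w - v"
proof -
  have "split_slope a b w \<le> split_slope a b v + (w - v)"
    unfolding split_slope_def
  proof (rule cSUP_least)
    fix s
    have "min (a s) (w - b s) \<le> min (a s) (v - b s) + (w - v)"
      using assms by simp
    also have "\<dots> \<le> (SUP s. min (a s) (v - b s)) + (w - v)"
      using cSUP_upper[OF UNIV_I bdd_above_split_slope_range] by simp
    finally show "min (a s) (w - b s) \<le> (SUP s. min (a s) (v - b s)) + (w - v)" .
  qed simp
  then show ?thesis
    by simp
qed

end

lemma convex_split_by_slope:
  fixes f P :: "real \<Rightarrow> real"
  assumes "convex_on UNIV f" "C1 f" and "mono P"
    and P_diff: "\<And>v w. v \<le> w \<Longrightarrow> P w - P v \<le> w - v"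
  obtains f1 where "\<And>x. (f1 has_real_derivative P (deriv f x)) (at x)"
    and "convex_on UNIV f1" "convex_on UNIV (\<lambda>x. f x - f1 x)" "C1 f1" "C1 (\<lambda>x. f x - f1 x)"
proof -
  have "continuous_on UNIV P"
  proof (rule lipschitz_on_continuous_on[where L = 1], rule lipschitz_onI)
    fix v w :: real
    show "dist (P v) (P w) \<le> 1 * dist v w"
      using monoD[OF \<open>mono P\<close>, of v w] monoD[OF \<open>mono P\<close>, of w v] P_diff[of v w] P_diff[of w v]
      by (cases "v \<le> w") (auto simp: dist_real_def)
  qed simp
  moreover have f': "\<And>x. (f has_real_derivative deriv f x) (at x)" "continuous_on UNIV (deriv f)"
    using assms(2) C1_has_real_derivative unfolding C1_def by blast+
  ultimately have cont: "continuous_on UNIV (\<lambda>x. P (deriv f x))"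
    by (auto intro: continuous_on_compose2)
  obtain f1 where f1: "\<And>x. (f1 has_real_derivative P (deriv f x)) (at x)"
    using exists_antiderivative[OF cont] by blast
  have f2: "((\<lambda>x. f x - f1 x) has_real_derivative deriv f x - P (deriv f x)) (at x)" for x
    by (intro DERIV_diff f' f1)
  have mono_f': "mono (deriv f)"
    using convex_on_UNIV_deriv_mono[OF assms(1) f'(1)] .
  have "convex_on UNIV f1"
    unfolding convex_on_UNIV_deriv_mono_iff[OF f1]
    using mono_f' \<open>mono P\<close> by (auto simp: mono_def)
  moreover have "convex_on UNIV (\<lambda>x. f x - f1 x)"
    unfolding convex_on_UNIV_deriv_mono_iff[OF f2]
    using mono_f' P_diff by (force simp: mono_def)
  moreover have "C1 f1" "C1 (\<lambda>x. f x - f1 x)"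
    using f1 f2 cont f'(2) by (auto intro!: C1I continuous_on_diff)
  ultimately show thesis
    using f1 that by blast
qed

lemma hopf_lax_at_critical_point:
  fixes c g :: "real \<Rightarrow> real"
  assumes c: "convex_on UNIV c" "\<And>u. (c has_real_derivative c' u) (at u)"
    and g: "convex_on UNIV g" "\<And>y. (g has_real_derivative g' y) (at y)"
    and "t > 0" and crit: "g' z + c' ((z - x) / t) = 0"
  shows "hopf_lax c t g x = ereal (g z + t * c ((z - x) / t))"
proof -
  define G where "G y = g y + t * c ((y - x) / t)" for y
  define r where "r = (z - x) / t"
  have "G z \<le> G y" for y
  proof -
    have "g' z = - c' r"
      using crit unfolding r_def by linarith
    then have "g z - c' r * (y - z) \<le> g y"
      using convex_on_UNIV_above_tangent[OF g, of z y] by simp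
    moreover have "t * (c r + c' r * ((y - x) / t - r)) \<le> t * c ((y - x) / t)"
      using convex_on_UNIV_above_tangent[OF c] \<open>t > 0\<close> by (intro mult_left_mono) auto
    moreover have "t * (c r + c' r * ((y - x) / t - r)) = t * c r + c' r * (y - z)"
      using \<open>t > 0\<close> by (simp add: r_def field_simps)
    ultimately show ?thesis
      unfolding G_def r_def[symmetric] by linarith
  qed
  then have "(INF y. ereal (G y)) = ereal (G z)"
    by (intro antisym INF_lower2[of z] INF_greatest) auto
  then show ?thesis
    unfolding hopf_lax_def G_def .
qed

lemma hopf_lax_add_at_common_critical_point:
  fixes \<alpha> \<beta> f1 f2 :: "real \<Rightarrow> real"
  assumes \<alpha>: "convex_on UNIV \<alpha>" "\<And>u. (\<alpha> has_real_derivative a u) (at u)"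
    and \<beta>: "convex_on UNIV \<beta>" "\<And>u. (\<beta> has_real_derivative b u) (at u)"
    and f1: "convex_on UNIV f1" "\<And>y. (f1 has_real_derivative f1' y) (at y)"
    and f2: "convex_on UNIV f2" "\<And>y. (f2 has_real_derivative f2' y) (at y)"
    and "t > 0" and crit1: "f1' z + a ((z - x) / t) = 0" and crit2: "f2' z + b ((z - x) / t) = 0"
  shows "hopf_lax (\<lambda>u. \<alpha> u + \<beta> u) t (\<lambda>y. f1 y + f2 y) x = hopf_lax \<alpha> t f1 x + hopf_lax \<beta> t f2 x"
proof -
  have "hopf_lax (\<lambda>u. \<alpha> u + \<beta> u) t (\<lambda>y. f1 y + f2 y) x
      = ereal (f1 z + f2 z + t * (\<alpha> ((z - x) / t) + \<beta> ((z - x) / t)))"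
    using crit1 crit2 \<open>t > 0\<close>
    by (intro hopf_lax_at_critical_point[where c' = "\<lambda>u. a u + b u" and g' = "\<lambda>y. f1' y + f2' y"]
        convex_on_add DERIV_add \<alpha> \<beta> f1 f2) auto
  also have "\<dots> = hopf_lax \<alpha> t f1 x + hopf_lax \<beta> t f2 x"
    using hopf_lax_at_critical_point[OF \<alpha> f1 \<open>t > 0\<close> crit1]
      hopf_lax_at_critical_point[OF \<beta> f2 \<open>t > 0\<close> crit2]
    by (simp add: algebra_simps)
  finally show ?thesis .
qed

lemma convex_bdd_below_deriv_gt:
  fixes f :: "real \<Rightarrow> real"
  assumes "convex_on UNIV f" "\<And>y. (f has_real_derivative f' y) (at y)" "bdd_below (range f)"
    and "c > 0"
  shows "\<exists>y\<ge>u. f' y > - c"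
proof (rule ccontr)
  assume "\<not> ?thesis"
  then have slope: "f' y \<le> - c" if "y \<ge> u" for y
    using that by force
  obtain B where B: "\<And>y. B \<le> f y"
    using assms(3) by (auto simp: bdd_below_def)
  define y where "y = u + (f u - B + 1) / c"
  have "y \<ge> u"
    using B[of u] \<open>c > 0\<close> by (simp add: y_def)
  have "f y + f' y * (u - y) \<le> f u"
    by (rule convex_on_UNIV_above_tangent[OF assms(1,2)])
  moreover have "c * (y - u) \<le> f' y * (u - y)"
    using mult_right_mono[OF slope[OF \<open>y \<ge> u\<close>], of "y - u"] \<open>y \<ge> u\<close> by (simp add: algebra_simps)
  moreover have "c * (y - u) = f u - B + 1"
    using \<open>c > 0\<close> by (simp add: y_def)
  ultimately show False
    using B[of y] by simp
qed

lemma convex_bdd_below_deriv_lt: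
  fixes f :: "real \<Rightarrow> real"
  assumes "convex_on UNIV f" "\<And>y. (f has_real_derivative f' y) (at y)" "bdd_below (range f)"
    and "c > 0"
  shows "\<exists>y\<le>u. f' y < c"
proof -
  have deriv: "((\<lambda>y. f (- y)) has_real_derivative - f' (- y)) (at y)" for y
    using DERIV_chain2[OF assms(2) DERIV_minus[OF DERIV_ident]] by simp
  have convex: "convex_on UNIV (\<lambda>y. f (- y))"
    unfolding convex_on_UNIV_deriv_mono_iff[OF deriv]
    using convex_on_UNIV_deriv_mono[OF assms(1,2)] by (auto simp: mono_def)
  obtain B where "\<And>y. B \<le> f y"
    using assms(3) by (auto simp: bdd_below_def)
  then have "bdd_below (range (\<lambda>y. f (- y)))"
    by (intro bdd_belowI2)
  then have "\<exists>y\<ge>- u. - f' (- y) > - c"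
    by (rule convex_bdd_below_deriv_gt[OF convex deriv _ \<open>c > 0\<close>])
  then obtain y where "- u \<le> y" "f' (- y) < c"
    by auto
  then show ?thesis
    by (intro exI[of _ "- y"]) auto
qed

lemma exists_hopf_lax_critical_point:
  fixes f c' :: "real \<Rightarrow> real"
  assumes f: "convex_on UNIV f" "\<And>y. (f has_real_derivative f' y) (at y)" "bdd_below (range f)"
    and "continuous_on UNIV f'"
    and "mono c'" "continuous_on UNIV c'" "c' (- 1) < 0" "0 < c' 1" and "t > 0"
  shows "\<exists>z. f' z + c' ((z - x) / t) = 0"
proof -
  define k where "k y = f' y + c' ((y - x) / t)" for y
  obtain y1 where "y1 \<ge> x + t" "f' y1 > - c' 1"
    using convex_bdd_below_deriv_gt[OF f \<open>0 < c' 1\<close>, of "x + t"] by blast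
  moreover have "c' 1 \<le> c' ((y1 - x) / t)"
    using \<open>y1 \<ge> x + t\<close> \<open>t > 0\<close> by (intro monoD[OF \<open>mono c'\<close>]) (simp add: le_divide_eq)
  ultimately have "k y1 > 0"
    unfolding k_def by linarith
  obtain y2 where "y2 \<le> x - t" "f' y2 < - c' (- 1)"
    using convex_bdd_below_deriv_lt[OF f, of "- c' (- 1)" "x - t"] \<open>c' (- 1) < 0\<close> by auto
  moreover have "c' ((y2 - x) / t) \<le> c' (- 1)"
    using \<open>y2 \<le> x - t\<close> \<open>t > 0\<close> by (intro monoD[OF \<open>mono c'\<close>]) (simp add: divide_le_eq)
  ultimately have "k y2 < 0"
    unfolding k_def by linarith
  have "continuous_on UNIV (\<lambda>y. c' ((y - x) / t))"
    by (rule continuous_on_compose2[OF assms(6)]) (use \<open>t > 0\<close> in \<open>auto intro!: continuous_intros\<close>)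
  then have "continuous_on UNIV k"
    unfolding k_def using assms(4) by (rule continuous_on_add[rotated])
  then have "connected (range k)"
    by (rule connected_continuous_image) simp
  then have "0 \<in> range k"
    by (rule connectedD_interval[of _ "k y2" "k y1"]) (use \<open>k y1 > 0\<close> \<open>k y2 < 0\<close> in auto)
  then obtain z where "k z = 0"
    by (metis rangeE)
  then show ?thesis
    unfolding k_def by blast
qed

lemma hopf_lax_split_by_split_slope:
  fixes \<alpha> \<beta> \<theta> f f1 :: "real \<Rightarrow> real"
  assumes "cost_function \<alpha>" "cost_function \<beta>" "cost_function \<theta>" "C1 \<alpha>" "C1 \<beta>" "C1 \<theta>"
    and sum: "\<And>u. \<alpha> u + \<beta> u = \<theta> u" and "strictly_convex \<theta>"
    and f: "convex_on UNIV f" "C1 f" "bdd_below (range f)"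
    and f1: "\<And>x. (f1 has_real_derivative split_slope (deriv \<alpha>) (deriv \<beta>) (deriv f x)) (at x)"
      "convex_on UNIV f1" "convex_on UNIV (\<lambda>x. f x - f1 x)"
    and "t > 0"
  shows "hopf_lax \<theta> t f x = hopf_lax \<alpha> t f1 x + hopf_lax \<beta> t (\<lambda>x. f x - f1 x) x"
proof -
  define P where "P = split_slope (deriv \<alpha>) (deriv \<beta>)"
  have \<theta>': "deriv \<theta> s = deriv \<alpha> s + deriv \<beta> s" for s
    using deriv_eq_add_if_C1[OF assms(4,5) sum] .
  have mono: "mono (deriv \<alpha>)" "mono (deriv \<beta>)" "mono (deriv \<theta>)"
    using cost_function_deriv_mono assms(1-6) by blast+
  have odd: "deriv \<alpha> (- u) = - deriv \<alpha> u" "deriv \<theta> (- u) = - deriv \<theta> u" for u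
    using cost_function_deriv_odd assms(1,3,4,6) by blast+
  have cont: "continuous_on UNIV (deriv f)" "continuous_on UNIV (deriv \<theta>)"
    using f(2) assms(6) by (simp_all add: C1_def)
  have "deriv \<theta> (- 1) < 0" "0 < deriv \<theta> 1"
    using strictly_convex_cost_function_deriv_pos[OF assms(3,8,6), of 1] odd(2)[of 1] by simp_all
  then obtain z where crit: "deriv f z + deriv \<theta> ((z - x) / t) = 0"
    using exists_hopf_lax_critical_point[OF f(1) C1_has_real_derivative[OF f(2)] f(3) cont(1)
        mono(3) cont(2) _ _ \<open>t > 0\<close>] by blast
  define r where "r = (z - x) / t"
  have "deriv f z = deriv \<alpha> (- r) + deriv \<beta> (- r)"
    using crit odd(2)[of r] \<theta>'[of "- r"] unfolding r_def by linarith
  then have crit1: "P (deriv f z) + deriv \<alpha> r = 0"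
    using split_slope_add[OF mono(1,2), of "- r"] odd(1)[of r] unfolding P_def by simp
  have crit2: "(deriv f z - P (deriv f z)) + deriv \<beta> r = 0"
    using crit crit1 \<theta>'[of r] unfolding r_def by linarith
  have f2: "((\<lambda>x. f x - f1 x) has_real_derivative deriv f y - P (deriv f y)) (at y)" for y
    unfolding P_def by (intro DERIV_diff C1_has_real_derivative[OF f(2)] f1(1))
  have "hopf_lax (\<lambda>u. \<alpha> u + \<beta> u) t (\<lambda>y. f1 y + (f y - f1 y)) x
      = hopf_lax \<alpha> t f1 x + hopf_lax \<beta> t (\<lambda>x. f x - f1 x) x"
    by (rule hopf_lax_add_at_common_critical_point[OF _ C1_has_real_derivative[OF assms(4)]
          _ C1_has_real_derivative[OF assms(5)] f1(2) f1(1)[folded P_def] f1(3) f2 \<open>t > 0\<close>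
          crit1[unfolded r_def] crit2[unfolded r_def]])
      (use assms(1,2) in \<open>simp_all add: cost_function_def\<close>)
  moreover have "(\<lambda>u. \<alpha> u + \<beta> u) = \<theta>" "(\<lambda>y. f1 y + (f y - f1 y)) = f"
    using sum by auto
  ultimately show ?thesis
    by simp
qed

theorem proposition2p4:
  fixes \<alpha> \<beta> \<theta> f :: "real \<Rightarrow> real"
  assumes "cost_function \<alpha>" and "cost_function \<beta>" and "cost_function \<theta>"
    and "C1 \<alpha>" and "C1 \<beta>" and "C1 \<theta>"
    and "\<And>x. \<alpha> x + \<beta> x = \<theta> x"
    and "strictly_convex \<theta>"
    and "convex_on UNIV f" and "C1 f" and "bdd_below (range f)"
  shows "\<exists>f1 f2 :: real \<Rightarrow> real.
           convex_on UNIV f1 \<and> convex_on UNIV f2 \<and> C1 f1 \<and> C1 f2 \<and>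
           (\<forall>x. f x = f1 x + f2 x) \<and>
           (\<forall>t>0. \<forall>x. hopf_lax \<theta> t f x = hopf_lax \<alpha> t f1 x + hopf_lax \<beta> t f2 x) \<and>
           (\<forall>x. deriv f x \<in> range (deriv \<theta>) \<longrightarrow>
                deriv f1 x = deriv \<alpha> (inv_into UNIV (deriv \<theta>) (deriv f x)))"
proof -
  define P where "P = split_slope (deriv \<alpha>) (deriv \<beta>)"
  have mono: "mono (deriv \<alpha>)" "mono (deriv \<beta>)"
    using cost_function_deriv_mono assms(1,2,4,5) by blast+
  obtain f1 where f1: "\<And>x. (f1 has_real_derivative P (deriv f x)) (at x)"
    and split: "convex_on UNIV f1" "convex_on UNIV (\<lambda>x. f x - f1 x)" "C1 f1" "C1 (\<lambda>x. f x - f1 x)"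
    using convex_split_by_slope[OF assms(9,10)] split_slope_mono[OF mono] split_slope_diff_le[OF mono]
    unfolding P_def by blast
  have "deriv \<theta> = (\<lambda>s. deriv \<alpha> s + deriv \<beta> s)"
    using deriv_eq_add_if_C1[OF assms(4,5,7)] by auto
  then have "deriv f1 x = deriv \<alpha> (inv_into UNIV (deriv \<theta>) (deriv f x))"
    if "deriv f x \<in> range (deriv \<theta>)" for x
    using split_slope_eq_inv_into[OF mono] DERIV_imp_deriv[OF f1] that unfolding P_def by simp
  moreover have "hopf_lax \<theta> t f x = hopf_lax \<alpha> t f1 x + hopf_lax \<beta> t (\<lambda>x. f x - f1 x) x"
    if "t > 0" for t x
    using hopf_lax_split_by_split_slope[OF assms f1[unfolded P_def] split(1,2) that] .
  ultimately show ?thesis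
    using split by (intro exI[of _ f1] exI[of _ "\<lambda>x. f x - f1 x"]) auto
qed

end
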